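(* Let $n,m\ge 1$, $X=\{x_1,\dots,x_m\}$, and for each $1\le i\le n$ let $A_i,B_i$ be nonempty subsets of $X$ with $A_i\cap B_i=\emptyset$. Let $\Sigma=\{A_i\rightarrow B_i:1\le i\le n\}$, a set of implications on $X$. Let $Y=\{y_1,\dots,y_n\}$ be a set disjoint from $X$, and let $\Sigma'$ be the set of implications on $X\cup Y$ consisting of $(A_i\cup (Y\setminus\{y_i\}))\rightarrow B_i$ for $1\le i\le n$, together with $Y\rightarrow X$. Then every optimum basis of the closure system on $X\cup Y$ associated with $\Sigma'$ is of the form $\{(A_i\cup(Y\setminus\{y_i\}))\rightarrow B_i: 1\le i\le n\}\cup\{Y\rightarrow S\}$, where $S$ is a minimum cardinality generator of the closure system on $X$ associated with $\Sigma$.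
   Context: An implication on a set $Z$ is a pair $A\rightarrow B$ with $A,B\subseteq Z$, $B\ne\emptyset$. For a set $\Sigma$ of implications on $Z$, the associated closure system $\langle Z,\phi\rangle$ has as closed sets exactly the $S\subseteq Z$ such that $A\subseteq S$ implies $B\subseteq S$ for every $(A\rightarrow B)\in\Sigma$, and $\phi(A)$ is the intersection of closed sets containing $A$. A set of implications is an implication basis of a closure system if its associated closure system has the same closed sets. The size of a set of implications $\{A_k\rightarrow B_k\}$ is $\sum_k(|A_k|+|B_k|)$; an optimum basis of a finite closure system is an implication basis of minimum size among all its implication bases. A generator of a closure system $\langle X,\phi\rangle$ is a set $S\subseteq X$ with $\phi(S)=X$; a minimum cardinality generator is a generator of least cardinality. *)

theory Defs
  imports Main
begin

definition is_implication :: "'a set \<Rightarrow> 'a set \<times> 'a set \<Rightarrow> bool" where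
  "is_implication Z I \<longleftrightarrow> fst I \<subseteq> Z \<and> snd I \<subseteq> Z \<and> snd I \<noteq> {}"

definition imp_closed :: "('a set \<times> 'a set) set \<Rightarrow> 'a set \<Rightarrow> bool" where
  "imp_closed \<Sigma> S \<longleftrightarrow> (\<forall>(A, B) \<in> \<Sigma>. A \<subseteq> S \<longrightarrow> B \<subseteq> S)"

definition closed_sets :: "'a set \<Rightarrow> ('a set \<times> 'a set) set \<Rightarrow> 'a set set" where
  "closed_sets Z \<Sigma> = {S. S \<subseteq> Z \<and> imp_closed \<Sigma> S}"

definition imp_closure :: "'a set \<Rightarrow> ('a set \<times> 'a set) set \<Rightarrow> 'a set \<Rightarrow> 'a set" where
  "imp_closure Z \<Sigma> A = \<Inter> {S \<in> closed_sets Z \<Sigma>. A \<subseteq> S}"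

definition implication_basis :: "'a set \<Rightarrow> 'a set set \<Rightarrow> ('a set \<times> 'a set) set \<Rightarrow> bool" where
  "implication_basis Z C \<Sigma> \<longleftrightarrow> (\<forall>I \<in> \<Sigma>. is_implication Z I) \<and> closed_sets Z \<Sigma> = C"

definition imp_size :: "('a set \<times> 'a set) set \<Rightarrow> nat" where
  "imp_size \<Sigma> = (\<Sum>(A, B) \<in> \<Sigma>. card A + card B)"

definition optimum_basis :: "'a set \<Rightarrow> 'a set set \<Rightarrow> ('a set \<times> 'a set) set \<Rightarrow> bool" where
  "optimum_basis Z C \<Sigma> \<longleftrightarrow> implication_basis Z C \<Sigma> \<and>
     (\<forall>\<Sigma>'. implication_basis Z C \<Sigma>' \<longrightarrow> imp_size \<Sigma> \<le> imp_size \<Sigma>')"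

definition generator :: "'a set \<Rightarrow> ('a set \<times> 'a set) set \<Rightarrow> 'a set \<Rightarrow> bool" where
  "generator Z \<Sigma> S \<longleftrightarrow> S \<subseteq> Z \<and> imp_closure Z \<Sigma> S = Z"

definition min_card_generator :: "'a set \<Rightarrow> ('a set \<times> 'a set) set \<Rightarrow> 'a set \<Rightarrow> bool" where
  "min_card_generator Z \<Sigma> S \<longleftrightarrow> generator Z \<Sigma> S \<and> (\<forall>T. generator Z \<Sigma> T \<longrightarrow> card S \<le> card T)"

end

theory Submission
  imports Defs
begin

text \<open>Split an optimum basis \<open>\<Sigma>\<close> of the encoded system into its trivial implications, the
  nontrivial ones whose premise contains all of \<open>Y\<close>, and, for each \<open>i\<close>, the nontrivial ones whose
  premise misses \<open>y i\<close>. The latter all have premise containing \<open>A i \<union> (Y - {y i})\<close> and conclusion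
  inside premise \<open>\<union> B i\<close>; one of them has exactly that premise and together they cover \<open>B i\<close>.
  The conclusions of the \<open>Y\<close>-part, cut down to \<open>X\<close>, generate \<open>X\<close> and cover \<open>n\<close> premise
  elements. So every part costs at least as much as its counterpart in the basis
  \<open>{A i \<union> (Y - {y i}) \<rightarrow> B i} \<union> {Y \<rightarrow> S\<^sub>0}\<close> with \<open>S\<^sub>0\<close> a minimum generator, and optimality
  forces equality in every part.\<close>

lemma closed_sets_respects: "T \<in> closed_sets Z \<Sigma> \<Longrightarrow> (A, B) \<in> \<Sigma> \<Longrightarrow> A \<subseteq> T \<Longrightarrow> B \<subseteq> T"
  unfolding closed_sets_def imp_closed_def by blast

lemma imp_closure_superset: "S \<subseteq> imp_closure Z \<Sigma> S"
  unfolding imp_closure_def by blast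

lemma imp_closure_least: "T \<in> closed_sets Z \<Sigma> \<Longrightarrow> S \<subseteq> T \<Longrightarrow> imp_closure Z \<Sigma> S \<subseteq> T"
  unfolding imp_closure_def by blast

lemma imp_closure_closed:
  assumes "Z \<in> closed_sets Z \<Sigma>" and "S \<subseteq> Z"
  shows "imp_closure Z \<Sigma> S \<in> closed_sets Z \<Sigma>"
proof -
  have "B \<subseteq> imp_closure Z \<Sigma> S" if "(A, B) \<in> \<Sigma>" and "A \<subseteq> imp_closure Z \<Sigma> S" for A B
    using that unfolding imp_closure_def closed_sets_def imp_closed_def by blast
  moreover have "imp_closure Z \<Sigma> S \<subseteq> Z"
    using imp_closure_least[OF assms] .
  ultimately show ?thesis
    unfolding closed_sets_def imp_closed_def by blast
qed

lemma generator_self: "Z \<in> closed_sets Z \<Sigma> \<Longrightarrow> generator Z \<Sigma> Z"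
  unfolding generator_def by (simp add: imp_closure_least imp_closure_superset subset_antisym)

lemma min_card_generator_exists: "generator Z \<Sigma> T \<Longrightarrow> \<exists>S. min_card_generator Z \<Sigma> S"
  unfolding min_card_generator_def by (rule ex_has_least_nat)

lemma generator_nonempty:
  assumes "Z \<noteq> {}" and "\<And>A B. (A, B) \<in> \<Sigma> \<Longrightarrow> A \<noteq> {}" and "generator Z \<Sigma> S"
  shows "S \<noteq> {}"
proof
  assume "S = {}"
  have "{} \<in> closed_sets Z \<Sigma>"
    using assms(2) unfolding closed_sets_def imp_closed_def by blast
  then have "imp_closure Z \<Sigma> {} = {}"
    using imp_closure_least by blast
  with \<open>S = {}\<close> assms(1,3) show False
    unfolding generator_def by simp
qed

lemma implication_basis_respected:
  assumes "implication_basis Z C \<Sigma>" and "(A, B) \<in> \<Sigma>" and "W \<in> C" and "A \<subseteq> W"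
  shows "B \<subseteq> W"
  using assms unfolding implication_basis_def closed_sets_def imp_closed_def by blast

lemma implication_basis_violated:
  assumes "implication_basis Z C \<Sigma>" and "W \<subseteq> Z" and "W \<notin> C"
  obtains A B where "(A, B) \<in> \<Sigma>" and "A \<subseteq> W" and "\<not> B \<subseteq> W"
  using assms unfolding implication_basis_def closed_sets_def imp_closed_def by blast

lemma implication_basis_member:
  "implication_basis Z C \<Sigma> \<Longrightarrow> (A, B) \<in> \<Sigma> \<Longrightarrow> A \<subseteq> Z \<and> B \<subseteq> Z \<and> B \<noteq> {}"
  unfolding implication_basis_def is_implication_def by fastforce

lemma implication_basis_finite:
  assumes "implication_basis Z C \<Sigma>" and "finite Z"
  shows "finite \<Sigma>"
proof (rule finite_subset)
  show "\<Sigma> \<subseteq> Pow Z \<times> Pow Z"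
    using implication_basis_member[OF assms(1)] by fastforce
  show "finite (Pow Z \<times> Pow Z)"
    using assms(2) by simp
qed

lemma imp_size_union:
  "finite \<Sigma> \<Longrightarrow> finite \<Sigma>' \<Longrightarrow> \<Sigma> \<inter> \<Sigma>' = {} \<Longrightarrow> imp_size (\<Sigma> \<union> \<Sigma>') = imp_size \<Sigma> + imp_size \<Sigma>'"
  unfolding imp_size_def by (rule sum.union_disjoint)

lemma imp_size_UN:
  assumes "finite I" and "\<And>i. i \<in> I \<Longrightarrow> finite (\<Sigma> i)"
    and "\<And>i j. i \<in> I \<Longrightarrow> j \<in> I \<Longrightarrow> i \<noteq> j \<Longrightarrow> \<Sigma> i \<inter> \<Sigma> j = {}"
  shows "imp_size (\<Union>i\<in>I. \<Sigma> i) = (\<Sum>i\<in>I. imp_size (\<Sigma> i))"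
  unfolding imp_size_def using assms by (intro sum.UNION_disjoint) auto

lemma imp_size_eq_0:
  assumes "finite \<Sigma>" and "\<And>A B. (A, B) \<in> \<Sigma> \<Longrightarrow> finite B \<and> B \<noteq> {}" and "imp_size \<Sigma> = 0"
  shows "\<Sigma> = {}"
  using assms unfolding imp_size_def by (fastforce simp: sum_eq_0_iff)

text \<open>The premises contribute at least one element per implication beyond the one with premise
  \<open>P\<close>, and the conclusions contribute at least every element they cover.\<close>

lemma imp_size_lower_bound:
  assumes fin: "finite \<Sigma>" and mem: "(P, Q) \<in> \<Sigma>"
    and prems: "\<And>A B. (A, B) \<in> \<Sigma> \<Longrightarrow> A \<noteq> {} \<and> finite A \<and> finite B"
    and cover: "D \<subseteq> \<Union>(snd ` \<Sigma>)"
  shows "card P + card D \<le> imp_size \<Sigma>"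
    and "imp_size \<Sigma> \<le> card P + card D \<Longrightarrow> \<Sigma> = {(P, D)}"
proof -
  let ?rest = "\<Sigma> - {(P, Q)}"
  have size: "imp_size \<Sigma> = (\<Sum>e\<in>\<Sigma>. card (fst e)) + (\<Sum>e\<in>\<Sigma>. card (snd e))"
    unfolding imp_size_def by (simp add: split_def sum.distrib)
  have prem_part: "(\<Sum>e\<in>\<Sigma>. card (fst e)) = card P + (\<Sum>e\<in>?rest. card (fst e))"
    using sum.remove[OF fin mem, of "\<lambda>e. card (fst e)"] by simp
  have "card ?rest = (\<Sum>e\<in>?rest. 1)"
    by simp
  also have "\<dots> \<le> (\<Sum>e\<in>?rest. card (fst e))"
    using prems by (intro sum_mono) (fastforce simp: Suc_le_eq card_gt_0_iff)
  finally have rest: "card ?rest \<le> (\<Sum>e\<in>?rest. card (fst e))" .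
  have "card D \<le> card (\<Union>(snd ` \<Sigma>))"
    using fin prems cover by (intro card_mono) fastforce+
  also have "\<dots> \<le> (\<Sum>e\<in>\<Sigma>. card (snd e))"
    using card_UN_le[OF fin, of snd] by simp
  finally have concl_part: "card D \<le> (\<Sum>e\<in>\<Sigma>. card (snd e))" .
  show "card P + card D \<le> imp_size \<Sigma>"
    using size prem_part concl_part by linarith
  assume le: "imp_size \<Sigma> \<le> card P + card D"
  then have "card ?rest = 0"
    using size prem_part rest concl_part by linarith
  then have "?rest = {}"
    using fin by simp
  then have single: "\<Sigma> = {(P, Q)}"
    using mem by blast
  then have "finite Q" and "D \<subseteq> Q" and "card Q \<le> card D"
    using cover prems le by (auto simp: imp_size_def)
  then have "D = Q"
    by (rule card_seteq)
  with single show "\<Sigma> = {(P, D)}"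
    by simp
qed

text \<open>The fresh points \<open>y i\<close> are switched on in all premises but the \<open>i\<close>-th, so a set missing
  exactly \<open>y i\<close> can only trigger the \<open>i\<close>-th implication; sets missing two of them are closed.\<close>

locale generator_encoding =
  fixes X :: "'a set" and n :: nat and A B :: "nat \<Rightarrow> 'a set" and y :: "nat \<Rightarrow> 'a"
  assumes finite_X: "finite X" and X_nonempty: "X \<noteq> {}" and n_pos: "n \<ge> 1"
    and AB: "\<And>i. i \<in> {1..n} \<Longrightarrow> A i \<subseteq> X \<and> B i \<subseteq> X \<and> A i \<noteq> {} \<and> B i \<noteq> {} \<and> A i \<inter> B i = {}"
    and inj_y: "inj_on y {1..n}" and Y_disjoint: "y ` {1..n} \<inter> X = {}"
begin

abbreviation "Y \<equiv> y ` {1..n}"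
abbreviation "Z \<equiv> X \<union> Y"
abbreviation "prem i \<equiv> A i \<union> (Y - {y i})"
abbreviation "\<Sigma>X \<equiv> (\<lambda>i. (A i, B i)) ` {1..n}"
abbreviation "encoded S \<equiv> (\<lambda>i. (prem i, B i)) ` {1..n} \<union> {(Y, S)}"
abbreviation "C \<equiv> closed_sets Z (encoded X)"

lemma y_notin_X: "i \<in> {1..n} \<Longrightarrow> y i \<notin> X"
  using Y_disjoint by blast

lemma y_in_prem: "i \<in> {1..n} \<Longrightarrow> j \<in> {1..n} \<Longrightarrow> i \<noteq> j \<Longrightarrow> y j \<in> prem i"
  using inj_y by (auto dest: inj_onD)

lemma y_notin_prem: "i \<in> {1..n} \<Longrightarrow> y i \<notin> prem i"
  using y_notin_X AB by blast

lemma Y_subset_iff: "i \<in> {1..n} \<Longrightarrow> Y \<subseteq> W \<longleftrightarrow> y i \<in> W \<and> Y - {y i} \<subseteq> W"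
  by (metis imageI insert_Diff insert_subset)

lemma card_Y: "card Y = n"
  using card_image[OF inj_y] by simp

lemma closed_sets_encoded_iff:
  "W \<in> closed_sets Z (encoded S) \<longleftrightarrow>
     W \<subseteq> Z \<and> (Y \<subseteq> W \<longrightarrow> S \<subseteq> W) \<and> (\<forall>i\<in>{1..n}. prem i \<subseteq> W \<longrightarrow> B i \<subseteq> W)"
  unfolding closed_sets_def imp_closed_def by auto

lemma closed_encoded_prem:
  assumes "W \<in> closed_sets Z (encoded S)" and "i \<in> {1..n}" and "prem i \<subseteq> W"
  shows "B i \<subseteq> W"
  using assms(1) _ assms(3) by (rule closed_sets_respects) (use assms(2) in simp)

lemma in_X_not_in_Y: "x \<in> X \<Longrightarrow> x \<notin> Y"
  using Y_disjoint by auto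

lemma B_prem_disjoint:
  assumes i: "i \<in> {1..n}"
  shows "B i \<inter> prem i = {}"
proof -
  have "b \<notin> prem i" if "b \<in> B i" for b
  proof -
    have "b \<in> X" and "b \<notin> A i"
      using that AB[OF i] by auto
    then show ?thesis
      using in_X_not_in_Y by auto
  qed
  then show ?thesis
    by auto
qed

lemma not_closed_cases:
  assumes "W \<subseteq> Z" and "W \<notin> C"
  shows "Y \<subseteq> W \<or> (\<exists>i\<in>{1..n}. y i \<notin> W \<and> prem i \<subseteq> W)" (is "_ \<or> ?missing")
proof (rule ccontr)
  assume neg: "\<not> (Y \<subseteq> W \<or> ?missing)"
  have Y: "\<not> Y \<subseteq> W"
    using neg by (rule contrapos_nn) (rule disjI1)
  have no_missing: "\<not> ?missing"
    using neg by (rule contrapos_nn) (rule disjI2)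
  have "W \<in> C"
    unfolding closed_sets_encoded_iff
  proof (intro conjI impI ballI)
    show "W \<subseteq> Z"
      by (fact assms(1))
    show "X \<subseteq> W" if "Y \<subseteq> W"
      using Y that by contradiction
    fix i assume i: "i \<in> {1..n}" and prem: "prem i \<subseteq> W"
    have "y i \<in> W"
    proof (rule ccontr)
      assume "y i \<notin> W"
      with i prem have ?missing
        by (intro bexI[of _ i] conjI)
      with no_missing show False
        by contradiction
    qed
    moreover have "Y - {y i} \<subseteq> W"
      using Un_upper2 prem by (rule subset_trans)
    ultimately have "Y \<subseteq> W"
      unfolding Y_subset_iff[OF i] ..
    with Y show "B i \<subseteq> W"
      by contradiction
  qed
  with assms(2) show False
    by contradiction
qed

lemma X_closed: "X \<in> closed_sets X \<Sigma>X"
  unfolding closed_sets_def imp_closed_def using AB by auto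

lemma encoded_generator_basis:
  assumes gen: "generator X \<Sigma>X S"
  shows "implication_basis Z C (encoded S)"
  unfolding implication_basis_def
proof
  have "S \<subseteq> X"
    using gen unfolding generator_def by (rule conjunct1)
  moreover have "S \<noteq> {}"
    by (rule generator_nonempty[OF X_nonempty _ gen]) (use AB in auto)
  ultimately have "is_implication Z (Y, S)"
    unfolding is_implication_def by auto
  moreover have "is_implication Z (prem i, B i)" if "i \<in> {1..n}" for i
    using AB[OF that] unfolding is_implication_def by auto
  ultimately show "\<forall>I\<in>encoded S. is_implication Z I"
    by auto
  have "X \<subseteq> W" if W: "W \<in> closed_sets Z (encoded S)" and "Y \<subseteq> W" for W
  proof -
    have "B i \<subseteq> W \<inter> X" if i: "i \<in> {1..n}" and "A i \<subseteq> W \<inter> X" for i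
    proof -
      have "prem i \<subseteq> W"
        using that \<open>Y \<subseteq> W\<close> by auto
      with W i have "B i \<subseteq> W"
        by (rule closed_encoded_prem)
      then show ?thesis
        using AB[OF i] by auto
    qed
    then have "W \<inter> X \<in> closed_sets X \<Sigma>X"
      unfolding closed_sets_def imp_closed_def by auto
    moreover have "S \<subseteq> W \<inter> X"
      using W \<open>Y \<subseteq> W\<close> \<open>S \<subseteq> X\<close> unfolding closed_sets_encoded_iff by auto
    ultimately have "imp_closure X \<Sigma>X S \<subseteq> W \<inter> X"
      by (rule imp_closure_least)
    then show ?thesis
      using gen unfolding generator_def by auto
  qed
  with \<open>S \<subseteq> X\<close> show "closed_sets Z (encoded S) = C"
    unfolding set_eq_iff closed_sets_encoded_iff by (meson subset_trans)
qed

lemma imp_size_encoded: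
  assumes "finite S"
  shows "imp_size (encoded S) = (\<Sum>i\<in>{1..n}. card (prem i) + card (B i)) + (n + card S)"
proof -
  have inj: "inj_on (\<lambda>i. (prem i, B i)) {1..n}"
    by (rule inj_onI) (metis prod.inject y_in_prem y_notin_prem)
  have "(Y, S) \<notin> (\<lambda>i. (prem i, B i)) ` {1..n}"
    using y_notin_prem by fastforce
  then have "imp_size (encoded S) = imp_size ((\<lambda>i. (prem i, B i)) ` {1..n}) + (card Y + card S)"
    by (simp add: imp_size_def)
  also have "imp_size ((\<lambda>i. (prem i, B i)) ` {1..n}) = (\<Sum>i\<in>{1..n}. card (prem i) + card (B i))"
    unfolding imp_size_def by (subst sum.reindex[OF inj]) simp
  finally show ?thesis
    using card_Y by simp
qed

context
  fixes \<Sigma> assumes basis: "implication_basis Z C \<Sigma>"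
begin

abbreviation "trivial_part \<equiv> {e \<in> \<Sigma>. snd e \<subseteq> fst e}"
abbreviation "Y_part \<equiv> {e \<in> \<Sigma>. \<not> snd e \<subseteq> fst e \<and> Y \<subseteq> fst e}"
abbreviation "missing_part i \<equiv> {e \<in> \<Sigma>. \<not> snd e \<subseteq> fst e \<and> y i \<notin> fst e}"

lemma finite_basis: "finite \<Sigma>"
  using implication_basis_finite[OF basis] finite_X by simp

lemma basis_member_finite: "(p, q) \<in> \<Sigma> \<Longrightarrow> finite p \<and> finite q \<and> q \<noteq> {}"
proof -
  assume "(p, q) \<in> \<Sigma>"
  then have "p \<subseteq> Z" and "q \<subseteq> Z" and "q \<noteq> {}"
    using implication_basis_member[OF basis] by auto
  moreover have "finite Z"
    using finite_X by simp
  ultimately show ?thesis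
    by (metis finite_subset)
qed

lemma nontrivial_cases:
  assumes "(p, q) \<in> \<Sigma>" and "\<not> q \<subseteq> p"
  shows "Y \<subseteq> p \<or> (\<exists>i\<in>{1..n}. y i \<notin> p \<and> prem i \<subseteq> p)"
proof (rule not_closed_cases)
  show "p \<subseteq> Z"
    using implication_basis_member[OF basis assms(1)] by (rule conjunct1)
  show "p \<notin> C"
    using implication_basis_respected[OF basis assms(1) _ subset_refl] assms(2) by auto
qed

text \<open>The key point is that \<open>p \<union> B i\<close> is closed.\<close>

lemma missing_part_shape:
  assumes e: "(p, q) \<in> \<Sigma>" and nontrivial: "\<not> q \<subseteq> p" and i: "i \<in> {1..n}" and y_i: "y i \<notin> p"
  shows "prem i \<subseteq> p" and "q \<subseteq> p \<union> B i"
proof -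
  have y_i_outside: "y i \<notin> p \<union> B i"
    using y_i y_notin_X[OF i] AB[OF i] by auto
  then have "\<not> Y \<subseteq> p \<union> B i"
    using imageI[OF i, of y] by (meson subsetD)
  have "\<not> Y \<subseteq> p"
    using y_i imageI[OF i, of y] by (meson subsetD)
  then obtain j where j: "j \<in> {1..n}" "y j \<notin> p" "prem j \<subseteq> p"
    using nontrivial_cases[OF e nontrivial] by meson
  have "j = i"
  proof (rule ccontr)
    assume "j \<noteq> i"
    with j(3) y_i show False
      using y_in_prem[OF j(1) i] by (meson subsetD)
  qed
  with j show "prem i \<subseteq> p"
    by simp
  have "p \<union> B i \<in> C"
    unfolding closed_sets_encoded_iff
  proof (intro conjI impI ballI)
    show "p \<union> B i \<subseteq> Z"
      using implication_basis_member[OF basis e] AB[OF i] by auto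
    show "X \<subseteq> p \<union> B i" if "Y \<subseteq> p \<union> B i"
      using that \<open>\<not> Y \<subseteq> p \<union> B i\<close> by contradiction
    fix k assume k: "k \<in> {1..n}" and prem_k: "prem k \<subseteq> p \<union> B i"
    show "B k \<subseteq> p \<union> B i"
    proof (cases "k = i")
      case False
      then have "y i \<in> p \<union> B i"
        using y_in_prem[OF k i] prem_k by auto
      with y_i_outside show ?thesis
        by contradiction
    qed simp
  qed
  then show "q \<subseteq> p \<union> B i"
    using implication_basis_respected[OF basis e] by auto
qed

lemma missing_part_has_prem:
  assumes i: "i \<in> {1..n}"
  shows "\<exists>q. (prem i, q) \<in> missing_part i"
proof -
  have not_closed: "prem i \<notin> C"
  proof
    assume "prem i \<in> C"
    then have "B i \<subseteq> prem i"
      using i by (rule closed_encoded_prem) simp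
    then show False
      using B_prem_disjoint[OF i] AB[OF i] by auto
  qed
  have "prem i \<subseteq> Z"
    using AB[OF i] by auto
  then obtain p q where pq: "(p, q) \<in> \<Sigma>" "p \<subseteq> prem i" "\<not> q \<subseteq> prem i"
    using not_closed by (rule implication_basis_violated[OF basis])
  then have nontrivial: "\<not> q \<subseteq> p" and y_i: "y i \<notin> p"
    using y_notin_prem[OF i] by auto
  then have "p = prem i"
    using missing_part_shape(1)[OF pq(1) _ i] pq(2) by auto
  with pq(1) nontrivial y_i show ?thesis
    by auto
qed

lemma missing_part_covers:
  assumes i: "i \<in> {1..n}"
  shows "B i \<subseteq> \<Union>(snd ` missing_part i)"
proof -
  define U where "U = \<Union>(snd ` missing_part i)"
  define W where "W = prem i \<union> (B i \<inter> U)"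
  have "b \<in> U" if b: "b \<in> B i" for b
  proof (rule ccontr)
    assume "b \<notin> U"
    with b have "b \<notin> W"
      using B_prem_disjoint[OF i] unfolding W_def by auto
    have "W \<subseteq> Z"
      using AB[OF i] unfolding W_def by auto
    moreover have "W \<notin> C"
    proof
      assume "W \<in> C"
      then have "B i \<subseteq> W"
        using i by (rule closed_encoded_prem) (simp add: W_def)
      with b \<open>b \<notin> W\<close> show False
        by auto
    qed
    ultimately obtain p q where pq: "(p, q) \<in> \<Sigma>" "p \<subseteq> W" "\<not> q \<subseteq> W"
      by (rule implication_basis_violated[OF basis])
    have "y i \<notin> W"
      using y_notin_prem[OF i] y_notin_X[OF i] AB[OF i] unfolding W_def by auto
    with pq have nontrivial: "\<not> q \<subseteq> p" and y_i: "y i \<notin> p"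
      by auto
    then have "q \<subseteq> U"
      using pq(1) unfolding U_def by force
    moreover have "q \<subseteq> p \<union> B i"
      by (rule missing_part_shape(2)[OF pq(1) nontrivial i y_i])
    ultimately have "q \<subseteq> W"
      using pq(2) unfolding W_def by auto
    with pq(3) show False
      by contradiction
  qed
  then show ?thesis
    unfolding U_def by auto
qed

lemma Y_part_has_Y: "\<exists>q. (Y, q) \<in> Y_part"
proof -
  obtain x where "x \<in> X"
    using X_nonempty by auto
  then have "x \<notin> Y"
    by (rule in_X_not_in_Y)
  have not_closed: "Y \<notin> C"
  proof
    assume "Y \<in> C"
    then have "X \<subseteq> Y"
      unfolding closed_sets_encoded_iff by simp
    with \<open>x \<in> X\<close> \<open>x \<notin> Y\<close> show False
      by auto
  qed
  have "Y \<subseteq> Z"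
    by simp
  then obtain p q where pq: "(p, q) \<in> \<Sigma>" "p \<subseteq> Y" "\<not> q \<subseteq> Y"
    using not_closed by (rule implication_basis_violated[OF basis])
  then have nontrivial: "\<not> q \<subseteq> p"
    by auto
  have "\<not> prem i \<subseteq> p" if i: "i \<in> {1..n}" for i
  proof
    assume "prem i \<subseteq> p"
    obtain a where "a \<in> A i"
      using AB[OF i] by auto
    with \<open>prem i \<subseteq> p\<close> pq(2) have "a \<in> Y"
      by auto
    moreover have "a \<in> X"
      using \<open>a \<in> A i\<close> AB[OF i] by auto
    ultimately show False
      using in_X_not_in_Y by auto
  qed
  then have "Y \<subseteq> p"
    using nontrivial_cases[OF pq(1) nontrivial] by meson
  with pq(2) have "p = Y"
    by (rule subset_antisym)
  with pq(1) nontrivial have "(Y, q) \<in> Y_part"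
    by simp
  then show ?thesis ..
qed

text \<open>If the closure \<open>T\<close> of \<open>S\<close> were not all of \<open>X\<close>, then \<open>Y \<union> T\<close> would be a non-closed set
  violating no implication of \<open>\<Sigma>\<close>.\<close>

lemma Y_part_generator: "generator X \<Sigma>X (\<Union>(snd ` Y_part) \<inter> X)"
proof -
  define S where "S = \<Union>(snd ` Y_part) \<inter> X"
  define T where "T = imp_closure X \<Sigma>X S"
  have "S \<subseteq> X"
    unfolding S_def by auto
  have "S \<subseteq> T"
    unfolding T_def by (rule imp_closure_superset)
  have T_closed: "T \<in> closed_sets X \<Sigma>X"
    unfolding T_def using X_closed \<open>S \<subseteq> X\<close> by (rule imp_closure_closed)
  then have "T \<subseteq> X"
    unfolding closed_sets_def by auto
  have "X \<subseteq> T"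
  proof (rule ccontr)
    assume "\<not> X \<subseteq> T"
    define W where "W = Y \<union> T"
    have "W \<subseteq> Z"
      using \<open>T \<subseteq> X\<close> unfolding W_def by auto
    moreover have "W \<notin> C"
    proof
      assume "W \<in> C"
      then have "X \<subseteq> W"
        unfolding closed_sets_encoded_iff W_def by auto
      then have "X \<subseteq> T"
        using in_X_not_in_Y unfolding W_def by auto
      with \<open>\<not> X \<subseteq> T\<close> show False
        by contradiction
    qed
    ultimately obtain p q where pq: "(p, q) \<in> \<Sigma>" "p \<subseteq> W" "\<not> q \<subseteq> W"
      by (rule implication_basis_violated[OF basis])
    then have nontrivial: "\<not> q \<subseteq> p"
      by auto
    have "q \<subseteq> Z"
      using implication_basis_member[OF basis pq(1)] by auto
    from nontrivial_cases[OF pq(1) nontrivial] show False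
    proof
      assume "Y \<subseteq> p"
      with pq(1) nontrivial have "(p, q) \<in> Y_part"
        by simp
      then have "q \<subseteq> \<Union>(snd ` Y_part)"
        using Union_upper[OF imageI, of "(p, q)" _ snd] by simp
      then have "q \<inter> X \<subseteq> T"
        using \<open>S \<subseteq> T\<close> unfolding S_def by auto
      with \<open>q \<subseteq> Z\<close> have "q \<subseteq> W"
        unfolding W_def by auto
      with pq(3) show False
        by contradiction
    next
      assume "\<exists>j\<in>{1..n}. y j \<notin> p \<and> prem j \<subseteq> p"
      then obtain j where j: "j \<in> {1..n}" "y j \<notin> p" "prem j \<subseteq> p"
        by auto
      have "A j \<subseteq> T"
      proof
        fix a assume "a \<in> A j"
        then have "a \<in> W" and "a \<in> X"
          using j(3) pq(2) AB[OF j(1)] by auto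
        then show "a \<in> T"
          using in_X_not_in_Y unfolding W_def by auto
      qed
      moreover have "(A j, B j) \<in> \<Sigma>X"
        using j(1) by simp
      ultimately have "B j \<subseteq> T"
        using T_closed closed_sets_respects by blast
      then have "q \<subseteq> W"
        using missing_part_shape(2)[OF pq(1) nontrivial j(1,2)] pq(2) unfolding W_def by auto
      with pq(3) show False
        by contradiction
    qed
  qed
  with \<open>T \<subseteq> X\<close> \<open>S \<subseteq> X\<close> show ?thesis
    unfolding generator_def S_def[symmetric] T_def by auto
qed

lemma basis_partition: "\<Sigma> = trivial_part \<union> Y_part \<union> (\<Union>i\<in>{1..n}. missing_part i)"
proof (intro equalityI subsetI)
  fix e assume "e \<in> \<Sigma>"
  obtain p q where e: "e = (p, q)"
    by fastforce
  with \<open>e \<in> \<Sigma>\<close> have pq: "(p, q) \<in> \<Sigma>"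
    by simp
  show "e \<in> trivial_part \<union> Y_part \<union> (\<Union>i\<in>{1..n}. missing_part i)"
  proof (cases "q \<subseteq> p")
    case nontrivial: False
    from nontrivial_cases[OF pq nontrivial] show ?thesis
    proof
      assume "Y \<subseteq> p"
      with pq nontrivial show ?thesis
        unfolding e by simp
    next
      assume "\<exists>i\<in>{1..n}. y i \<notin> p \<and> prem i \<subseteq> p"
      then obtain i where i: "i \<in> {1..n}" and "y i \<notin> p"
        by auto
      with pq nontrivial have "e \<in> missing_part i"
        unfolding e by simp
      then show ?thesis
        by (rule UnI2[OF UN_I[OF i]])
    qed
  qed (use pq e in simp)
qed auto

lemma missing_parts_disjoint:
  assumes i: "i \<in> {1..n}" and j: "j \<in> {1..n}" and "i \<noteq> j"
  shows "missing_part i \<inter> missing_part j = {}"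
proof -
  have "y j \<in> fst e" if "e \<in> missing_part i" for e
  proof -
    have "prem i \<subseteq> fst e"
      using that missing_part_shape(1)[OF _ _ i, of "fst e" "snd e"] by simp
    then show ?thesis
      using y_in_prem[OF i j \<open>i \<noteq> j\<close>] by auto
  qed
  then show ?thesis
    by auto
qed

lemma Y_part_missing_part_disjoint:
  assumes "i \<in> {1..n}"
  shows "Y_part \<inter> missing_part i = {}"
proof -
  have "y i \<in> Y"
    using assms by simp
  then have "y i \<in> fst e" if "e \<in> Y_part" for e
    using that by auto
  then show ?thesis
    by auto
qed

lemma imp_size_partition:
  "imp_size \<Sigma> = imp_size trivial_part + imp_size Y_part + (\<Sum>i\<in>{1..n}. imp_size (missing_part i))"
proof -
  have fin: "finite E" if "E \<subseteq> \<Sigma>" for E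
    using finite_subset[OF that finite_basis] .
  let ?M = "\<Union>i\<in>{1..n}. missing_part i"
  have "imp_size \<Sigma> = imp_size trivial_part + imp_size (Y_part \<union> ?M)"
    by (subst basis_partition, subst Un_assoc, rule imp_size_union) (auto intro: fin)
  also have "imp_size (Y_part \<union> ?M) = imp_size Y_part + imp_size ?M"
    using Y_part_missing_part_disjoint by (intro imp_size_union) (auto intro: fin)
  also have "imp_size ?M = (\<Sum>i\<in>{1..n}. imp_size (missing_part i))"
    by (rule imp_size_UN[OF _ fin missing_parts_disjoint]) auto
  finally show ?thesis
    by simp
qed

lemma imp_size_missing_part:
  assumes i: "i \<in> {1..n}"
  shows "card (prem i) + card (B i) \<le> imp_size (missing_part i)"
    and "imp_size (missing_part i) \<le> card (prem i) + card (B i) \<Longrightarrow> missing_part i = {(prem i, B i)}"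
proof -
  obtain q where q: "(prem i, q) \<in> missing_part i"
    using missing_part_has_prem[OF i] by blast
  have "p \<noteq> {} \<and> finite p \<and> finite q" if "(p, q) \<in> missing_part i" for p q
  proof -
    have "A i \<subseteq> p"
      using that missing_part_shape(1)[of p q i] i by auto
    then show ?thesis
      using that AB[OF i] basis_member_finite[of p q] by auto
  qed
  note bound = imp_size_lower_bound[OF _ q this missing_part_covers[OF i]]
  show "card (prem i) + card (B i) \<le> imp_size (missing_part i)"
    and "imp_size (missing_part i) \<le> card (prem i) + card (B i) \<Longrightarrow> missing_part i = {(prem i, B i)}"
    using bound finite_basis by auto
qed

lemma imp_size_Y_part:
  defines "S \<equiv> \<Union>(snd ` Y_part) \<inter> X"
  shows "n + card S \<le> imp_size Y_part"
    and "imp_size Y_part \<le> n + card S \<Longrightarrow> Y_part = {(Y, S)}"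
proof -
  obtain q where q: "(Y, q) \<in> Y_part"
    using Y_part_has_Y by blast
  have "Y \<noteq> {}"
    using n_pos by auto
  then have "p \<noteq> {} \<and> finite p \<and> finite q" if "(p, q) \<in> Y_part" for p q
    using that basis_member_finite[of p q] by auto
  note bound = imp_size_lower_bound[OF _ q this, of S]
  show "n + card S \<le> imp_size Y_part"
    and "imp_size Y_part \<le> n + card S \<Longrightarrow> Y_part = {(Y, S)}"
    using bound finite_basis card_Y unfolding S_def by auto
qed

lemma imp_size_basis_lower_bound:
  defines "S \<equiv> \<Union>(snd ` Y_part) \<inter> X"
  shows "(\<Sum>i\<in>{1..n}. card (prem i) + card (B i)) + (n + card S) \<le> imp_size \<Sigma>"
proof -
  have "(\<Sum>i\<in>{1..n}. card (prem i) + card (B i)) \<le> (\<Sum>i\<in>{1..n}. imp_size (missing_part i))"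
    using imp_size_missing_part(1) by (rule sum_mono)
  with imp_size_partition imp_size_Y_part(1) show ?thesis
    unfolding S_def by linarith
qed

lemma basis_eq_encoded_if_tight:
  defines "S \<equiv> \<Union>(snd ` Y_part) \<inter> X"
  assumes tight: "imp_size \<Sigma> \<le> (\<Sum>i\<in>{1..n}. card (prem i) + card (B i)) + (n + card S)"
  shows "\<Sigma> = encoded S"
proof -
  let ?b = "\<lambda>i. card (prem i) + card (B i)"
  have parts: "sum ?b {1..n} \<le> (\<Sum>i\<in>{1..n}. imp_size (missing_part i))"
    using imp_size_missing_part(1) by (rule sum_mono)
  note total = imp_size_partition imp_size_Y_part(1)[folded S_def]
  have "imp_size trivial_part = 0" and Y_size: "imp_size Y_part \<le> n + card S"
    and sums: "sum ?b {1..n} = (\<Sum>i\<in>{1..n}. imp_size (missing_part i))"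
    using tight parts total by linarith+
  have trivial: "trivial_part = {}"
  proof (rule imp_size_eq_0)
    show "finite trivial_part"
      using finite_basis by simp
    show "finite Q \<and> Q \<noteq> {}" if "(P, Q) \<in> trivial_part" for P Q
      using that basis_member_finite by auto
  qed fact
  have Y_part: "Y_part = {(Y, S)}"
    using imp_size_Y_part(2)[folded S_def] Y_size .
  have missing: "missing_part i = {(prem i, B i)}" if i: "i \<in> {1..n}" for i
  proof (rule imp_size_missing_part(2)[OF i])
    show "imp_size (missing_part i) \<le> ?b i"
      using sum_mono_inv[OF sums imp_size_missing_part(1) i] by simp
  qed
  have "\<Sigma> = trivial_part \<union> Y_part \<union> (\<Union>i\<in>{1..n}. missing_part i)"
    by (rule basis_partition)
  also have "\<dots> = {} \<union> {(Y, S)} \<union> (\<Union>i\<in>{1..n}. {(prem i, B i)})"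
    using missing by (simp only: trivial Y_part cong: SUP_cong)
  also have "\<dots> = encoded S"
    by auto
  finally show ?thesis .
qed

end

lemma optimum_basis_encodes_min_generator:
  assumes opt: "optimum_basis Z C \<Sigma>"
  shows "\<exists>S. min_card_generator X \<Sigma>X S \<and> \<Sigma> = encoded S"
proof -
  have basis: "implication_basis Z C \<Sigma>"
    using opt unfolding optimum_basis_def by (rule conjunct1)
  obtain S0 where S0: "min_card_generator X \<Sigma>X S0"
    using min_card_generator_exists[OF generator_self[OF X_closed]] by blast
  then have gen_S0: "generator X \<Sigma>X S0"
    unfolding min_card_generator_def by (rule conjunct1)
  define S where "S = \<Union>(snd ` Y_part \<Sigma>) \<inter> X"
  have gen_S: "generator X \<Sigma>X S"
    unfolding S_def using Y_part_generator[OF basis] .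
  have "S0 \<subseteq> X"
    using gen_S0 unfolding generator_def by (rule conjunct1)
  then have fin_S0: "finite S0"
    using finite_X by (rule finite_subset)
  have "implication_basis Z C (encoded S0)"
    using gen_S0 by (rule encoded_generator_basis)
  with opt have "imp_size \<Sigma> \<le> imp_size (encoded S0)"
    unfolding optimum_basis_def by blast
  also have "\<dots> = (\<Sum>i\<in>{1..n}. card (prem i) + card (B i)) + (n + card S0)"
    using imp_size_encoded[OF fin_S0] .
  finally have upper: "imp_size \<Sigma> \<le> (\<Sum>i\<in>{1..n}. card (prem i) + card (B i)) + (n + card S0)" .
  moreover have "card S0 \<le> card S"
    using S0 gen_S unfolding min_card_generator_def by blast
  ultimately have "imp_size \<Sigma> \<le> (\<Sum>i\<in>{1..n}. card (prem i) + card (B i)) + (n + card S)"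
    by linarith
  then have "\<Sigma> = encoded S"
    unfolding S_def by (rule basis_eq_encoded_if_tight[OF basis])
  moreover have "card S \<le> card S0"
    using upper imp_size_basis_lower_bound[OF basis, folded S_def] by linarith
  then have "min_card_generator X \<Sigma>X S"
    using gen_S S0 unfolding min_card_generator_def by (meson le_trans)
  ultimately show ?thesis
    by blast
qed

end

theorem claim2:
  fixes X :: "'a set" and n :: nat
    and A B :: "nat \<Rightarrow> 'a set" and y :: "nat \<Rightarrow> 'a"
  assumes "finite X" and "X \<noteq> {}" and "n \<ge> 1"
    and "\<And>i. i \<in> {1..n} \<Longrightarrow> A i \<subseteq> X \<and> B i \<subseteq> X \<and> A i \<noteq> {} \<and> B i \<noteq> {} \<and> A i \<inter> B i = {}"
    and "inj_on y {1..n}"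
    and "y ` {1..n} \<inter> X = {}"
  shows "\<forall>\<Sigma>o. optimum_basis (X \<union> y ` {1..n})
            (closed_sets (X \<union> y ` {1..n})
              ((\<lambda>i. (A i \<union> (y ` {1..n} - {y i}), B i)) ` {1..n} \<union> {(y ` {1..n}, X)})) \<Sigma>o
          \<longrightarrow> (\<exists>S. min_card_generator X ((\<lambda>i. (A i, B i)) ` {1..n}) S \<and>
                  \<Sigma>o = (\<lambda>i. (A i \<union> (y ` {1..n} - {y i}), B i)) ` {1..n} \<union> {(y ` {1..n}, S)})"
proof -
  interpret generator_encoding X n A B y
    by (rule generator_encoding.intro) (fact assms)+
  show ?thesis
    by (intro allI impI) (rule optimum_basis_encodes_min_generator)
qed

end
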